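(* Let $\mathcal P$ be a 2-reflex orthostack made of three bricks with canonical contact rectangles and signature $\sqcap_i\sqcap_j$ (for some types $i,j\in\{1,2,3,4\}$) with $j\neq 4$. Then $\mathcal P$ is guarded by a single vertical closed face guard.
   Context: A 2-reflex orthostack is an orthogonal polyhedron with no reflex edge parallel to the vertical ($z$) axis all of whose horizontal cross-sections are simply connected; it is a stack of bricks $B_t=R_t\times[z_{t-1},z_t]$, $t=1,\dots,k$ (bottom to top), $z_0<\dots<z_k$, each $R_t$ an axis-parallel rectangle, $R_t\ne R_{t+1}$. The contact rectangle between $B_t$ and $B_{t+1}$ is $(R_t\cap R_{t+1})\times\{z_t\}$; it is canonical if one of $R_t,R_{t+1}$ is strictly contained in the other and their set difference is connected (so exactly one horizontal face of the orthostack lies in the plane $z=z_t$). The type of a canonical contact rectangle is the number $i\in\{1,2,3,4\}$ of sides of the smaller of the two rectangles that are not contained in the boundary of the larger one (equivalently, the number of edges of the orthostack on its perimeter). The contact is denoted $\sqcup_i$ if $R_t\subsetneq R_{t+1}$ (lower brick's vertical projection inside the upper one's) and $\sqcap_i$ if $R_{t+1}\subsetneq R_t$. The signature is the sequence of these symbols for $t=1,\dots,k-1$, read from bottom to top. A point $x$ is visible to $y$ if the segment $xy$ does not meet the exterior of the polyhedron; a closed face guard is a face including its boundary; it guards the polyhedron if every point is visible from some point of it. A face is vertical if it is parallel to the $z$-axis, horizontal if orthogonal to it. *)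

theory Defs
  imports "HOL-Analysis.Analysis"
begin

definition rect :: "real \<Rightarrow> real \<Rightarrow> real \<Rightarrow> real \<Rightarrow> (real \<times> real) set" where
  "rect a b c d = {a..b} \<times> {c..d}"

definition rect_sides :: "real \<Rightarrow> real \<Rightarrow> real \<Rightarrow> real \<Rightarrow> (real \<times> real) set set" where
  "rect_sides a b c d = {{a} \<times> {c..d}, {b} \<times> {c..d}, {a..b} \<times> {c}, {a..b} \<times> {d}}"

text \<open>Brick R x [z0,z1] in real^3 (third coordinate is the vertical axis).\<close>
definition brick :: "(real \<times> real) set \<Rightarrow> real \<Rightarrow> real \<Rightarrow> (real^3) set" where
  "brick R z0 z1 = {p. (p$1, p$2) \<in> R \<and> z0 \<le> p$3 \<and> p$3 \<le> z1}"

definition orthostack ::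
  "nat \<Rightarrow> (nat \<Rightarrow> real) \<Rightarrow> (nat \<Rightarrow> real) \<Rightarrow> (nat \<Rightarrow> real) \<Rightarrow> (nat \<Rightarrow> real)
   \<Rightarrow> (nat \<Rightarrow> real) \<Rightarrow> (real^3) set" where
  "orthostack k x1 x2 y1 y2 z =
     (\<Union>t\<in>{1..k}. brick (rect (x1 t) (x2 t) (y1 t) (y2 t)) (z (t - 1)) (z t))"

definition canonical_contact :: "(real \<times> real) set \<Rightarrow> (real \<times> real) set \<Rightarrow> bool" where
  "canonical_contact L S \<longleftrightarrow> S \<subset> L \<and> connected (L - S)"

definition contact_type ::
  "real \<Rightarrow> real \<Rightarrow> real \<Rightarrow> real \<Rightarrow> (real \<times> real) set \<Rightarrow> nat" where
  "contact_type a b c d L = card {s \<in> rect_sides a b c d. \<not> s \<subseteq> frontier L}"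

text \<open>Points in the relative interior of a face lying in the plane a.x = b, with the
  polyhedron locally on the side a.x <= b.\<close>
definition face_points :: "(real^3) set \<Rightarrow> real^3 \<Rightarrow> real \<Rightarrow> (real^3) set" where
  "face_points P a b =
     {p. a \<bullet> p = b \<and> (\<exists>e>0. ball p e \<inter> P = ball p e \<inter> {x. a \<bullet> x \<le> b})}"

definition closed_face :: "(real^3) set \<Rightarrow> (real^3) set \<Rightarrow> bool" where
  "closed_face P F \<longleftrightarrow>
     (\<exists>a b. a \<noteq> 0 \<and> (\<exists>C\<in>components (face_points P a b). F = closure C))"

definition vertical_closed_face :: "(real^3) set \<Rightarrow> (real^3) set \<Rightarrow> bool" where
  "vertical_closed_face P F \<longleftrightarrow>
     (\<exists>a b. a \<noteq> 0 \<and> a$3 = 0 \<and> (\<exists>C\<in>components (face_points P a b). F = closure C))"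

definition visible :: "(real^3) set \<Rightarrow> real^3 \<Rightarrow> real^3 \<Rightarrow> bool" where
  "visible P x y \<longleftrightarrow> closed_segment x y \<subseteq> P"

definition guards :: "(real^3) set \<Rightarrow> (real^3) set \<Rightarrow> bool" where
  "guards P G \<longleftrightarrow> (\<forall>p\<in>P. \<exists>g\<in>G. visible P g p)"

end

theory Submission
  imports Defs
begin

text \<open>
  Because the upper contact is not of type 4, some side of R3 lies on a side of R2, so the bricks
  B2 and B3 have a common vertical wall plane, and the part of it above height z1 is a vertical
  face of the orthostack. Each brick is convex, hence seen entirely from any of its points: the
  face contains a point at height z2 lying in both B2 and B3, and its closure contains a point at
  height z1 on the top of B1.
\<close>

lemma guards_convex_cover:
  assumes "P = \<Union>\<B>" and "\<And>B. B \<in> \<B> \<Longrightarrow> convex B \<and> B \<inter> G \<noteq> {}"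
  shows "guards P G"
  unfolding guards_def visible_def
proof
  fix p assume "p \<in> P"
  then obtain B where B: "B \<in> \<B>" "p \<in> B" using assms(1) by blast
  then obtain g where "g \<in> B" "g \<in> G" using assms(2) by blast
  then have "closed_segment g p \<subseteq> B" using B assms(2) closed_segment_subset by blast
  then show "\<exists>g\<in>G. closed_segment g p \<subseteq> P" using \<open>g \<in> G\<close> B assms(1) by blast
qed

lemma card_rect_sides: assumes "a < b" "c < d" shows "card (rect_sides a b c d) = 4"
  using assms by (simp add: rect_sides_def times_eq_iff)

lemma rect_subset_iff:
  assumes "a \<le> b" "c \<le> d"
  shows "rect a b c d \<subseteq> rect A B C D \<longleftrightarrow> A \<le> a \<and> b \<le> B \<and> C \<le> c \<and> d \<le> D"
  using assms by (auto simp: rect_def times_subset_iff)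

lemma interior_rect: "interior (rect A B C D) = {A<..<B} \<times> {C<..<D}"
  by (simp add: rect_def interior_Times interior_atLeastAtMost_real)

lemma contact_type_ne_4_imp_shared_side:
  assumes "a < b" "c < d" and sub: "rect a b c d \<subseteq> rect A B C D"
    and "contact_type a b c d (rect A B C D) \<noteq> 4"
  shows "a = A \<or> b = B \<or> c = C \<or> d = D"
proof (rule ccontr)
  assume "\<not> ?thesis"
  with sub assms(1,2) have "A < a" "b < B" "C < c" "d < D"
    by (auto simp: rect_subset_iff)
  then have "rect a b c d \<subseteq> interior (rect A B C D)"
    unfolding interior_rect by (auto simp: rect_def)
  moreover have "s \<noteq> {} \<and> s \<subseteq> rect a b c d" if "s \<in> rect_sides a b c d" for s
    using that assms(1,2) by (auto simp: rect_sides_def rect_def)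
  ultimately have "\<not> s \<subseteq> frontier (rect A B C D)" if "s \<in> rect_sides a b c d" for s
    using that by (fastforce simp: frontier_def)
  then have "contact_type a b c d (rect A B C D) = card (rect_sides a b c d)"
    unfolding contact_type_def by (metis (mono_tags, lifting) Collect_mem_eq Collect_cong)
  with assms card_rect_sides show False by simp
qed

text \<open>
  Coordinates are taken along two orthonormal horizontal directions a, c, so that the four
  possible positions of the shared wall are reduced to the single case of the wall a \<bullet> q = U2 3.
\<close>

definition frame_box ::
  "real^3 \<Rightarrow> real^3 \<Rightarrow> real \<Rightarrow> real \<Rightarrow> real \<Rightarrow> real \<Rightarrow> real \<Rightarrow> real \<Rightarrow> (real^3) set" where
  "frame_box a c u1 u2 v1 v2 w1 w2 =
     {q. u1 \<le> a \<bullet> q \<and> a \<bullet> q \<le> u2 \<and> v1 \<le> c \<bullet> q \<and> c \<bullet> q \<le> v2 \<and> w1 \<le> q$3 \<and> q$3 \<le> w2}"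

definition frame_stack ::
  "nat \<Rightarrow> real^3 \<Rightarrow> real^3 \<Rightarrow> (nat \<Rightarrow> real) \<Rightarrow> (nat \<Rightarrow> real) \<Rightarrow> (nat \<Rightarrow> real)
   \<Rightarrow> (nat \<Rightarrow> real) \<Rightarrow> (nat \<Rightarrow> real) \<Rightarrow> (real^3) set" where
  "frame_stack k a c U1 U2 V1 V2 z =
     (\<Union>t\<in>{1..k}. frame_box a c (U1 t) (U2 t) (V1 t) (V2 t) (z (t - 1)) (z t))"

lemma convex_frame_box: "convex (frame_box a c u1 u2 v1 v2 w1 w2)"
proof -
  have "frame_box a c u1 u2 v1 v2 w1 w2 =
          {q. u1 \<le> a \<bullet> q} \<inter> {q. a \<bullet> q \<le> u2} \<inter> {q. v1 \<le> c \<bullet> q} \<inter> {q. c \<bullet> q \<le> v2}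
          \<inter> {q. w1 \<le> axis 3 1 \<bullet> q} \<inter> {q. axis 3 1 \<bullet> q \<le> w2}"
    by (auto simp: frame_box_def inner_axis')
  then show ?thesis by (simp add: convex_Int convex_halfspace_ge convex_halfspace_le)
qed

lemma orthostack_eq_frame_stack:
  "orthostack k x1 x2 y1 y2 z = frame_stack k (axis 1 1) (axis 2 1) x1 x2 y1 y2 z"
  by (auto simp: orthostack_def frame_stack_def brick_def rect_def frame_box_def inner_axis')

lemma frame_stack_uminus:
  "frame_stack k (- a) c (\<lambda>t. - U2 t) (\<lambda>t. - U1 t) V1 V2 z = frame_stack k a c U1 U2 V1 V2 z"
  by (auto simp: frame_stack_def frame_box_def)

lemma frame_stack_swap:
  "frame_stack k c a V1 V2 U1 U2 z = frame_stack k a c U1 U2 V1 V2 z"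
  by (auto simp: frame_stack_def frame_box_def)

lemma frame_stack_3:
  "frame_stack 3 a c U1 U2 V1 V2 z =
     frame_box a c (U1 1) (U2 1) (V1 1) (V2 1) (z 0) (z 1)
     \<union> frame_box a c (U1 2) (U2 2) (V1 2) (V2 2) (z 1) (z 2)
     \<union> frame_box a c (U1 3) (U2 3) (V1 3) (V2 3) (z 2) (z 3)"
proof -
  have "{1..3::nat} = {1, 2, 3}" by auto
  then show ?thesis by (auto simp: frame_stack_def)
qed

locale horizontal_frame =
  fixes a c :: "real^3"
  assumes a_unit: "a \<bullet> a = 1" and c_unit: "c \<bullet> c = 1" and orth: "a \<bullet> c = 0"
    and a_horizontal: "a $ 3 = 0" and c_horizontal: "c $ 3 = 0"
begin

definition point :: "real \<Rightarrow> real \<Rightarrow> real \<Rightarrow> real^3" where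
  "point u v w = u *\<^sub>R a + v *\<^sub>R c + w *\<^sub>R axis 3 1"

lemma inner_point [simp]:
  "a \<bullet> point u v w = u" "c \<bullet> point u v w = v" "point u v w $ 3 = w"
  using a_unit c_unit orth a_horizontal c_horizontal
  by (simp_all add: point_def inner_add_right inner_axis inner_commute)

lemma coordinate_dist_le:
  "\<bar>a \<bullet> q - a \<bullet> p\<bar> \<le> dist q p" "\<bar>c \<bullet> q - c \<bullet> p\<bar> \<le> dist q p" "\<bar>q $ 3 - p $ 3\<bar> \<le> dist q p"
proof -
  have "norm a = 1" "norm c = 1" using a_unit c_unit by (simp_all add: norm_eq_sqrt_inner)
  then show "\<bar>a \<bullet> q - a \<bullet> p\<bar> \<le> dist q p" "\<bar>c \<bullet> q - c \<bullet> p\<bar> \<le> dist q p"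
    using Cauchy_Schwarz_ineq2[of a "q - p"] Cauchy_Schwarz_ineq2[of c "q - p"]
    by (simp_all add: dist_norm inner_diff_right)
  show "\<bar>q $ 3 - p $ 3\<bar> \<le> dist q p"
    using component_le_norm_cart[of "q - p" 3] by (simp add: dist_norm)
qed

lemma wall_subset_face_points:
  assumes "U1 2 \<le> U1 3" "U1 3 < U2 3" "U2 3 = U2 2" "V1 2 \<le> V1 3" "V2 3 \<le> V2 2"
  shows "{p. a \<bullet> p = U2 3 \<and> V1 3 < c \<bullet> p \<and> c \<bullet> p < V2 3 \<and> z 1 < p $ 3 \<and> p $ 3 < z 3}
           \<subseteq> face_points (frame_stack 3 a c U1 U2 V1 V2 z) a (U2 3)"
    (is "?S \<subseteq> face_points ?P a ?X")
proof
  fix p assume "p \<in> ?S"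
  then have p: "a \<bullet> p = ?X" "V1 3 < c \<bullet> p" "c \<bullet> p < V2 3" "z 1 < p $ 3" "p $ 3 < z 3"
    by auto
  define e where "e = Min {p $ 3 - z 1, z 3 - p $ 3, c \<bullet> p - V1 3, V2 3 - c \<bullet> p, ?X - U1 3}"
  have "e > 0" using p assms by (simp add: e_def)
  have near: "\<bar>a \<bullet> q - ?X\<bar> < e" "z 1 < q $ 3" "q $ 3 < z 3" "V1 3 < c \<bullet> q" "c \<bullet> q < V2 3"
    "U1 3 < a \<bullet> q" if "q \<in> ball p e" for q
  proof -
    have "dist q p < e" using that by (simp add: dist_commute)
    moreover have "e \<le> p $ 3 - z 1" "e \<le> z 3 - p $ 3" "e \<le> c \<bullet> p - V1 3" "e \<le> V2 3 - c \<bullet> p"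
      "e \<le> ?X - U1 3"
      by (simp_all add: e_def)
    ultimately show "\<bar>a \<bullet> q - ?X\<bar> < e" "z 1 < q $ 3" "q $ 3 < z 3" "V1 3 < c \<bullet> q" "c \<bullet> q < V2 3"
      "U1 3 < a \<bullet> q"
      using coordinate_dist_le[of q p] p by linarith+
  qed
  have "ball p e \<inter> ?P = ball p e \<inter> {q. a \<bullet> q \<le> ?X}"
  proof (intro set_eqI iffI)
    fix q assume q: "q \<in> ball p e \<inter> ?P"
    then have "a \<bullet> q \<le> ?X"
      using near[of q] assms by (auto simp: frame_stack_3 frame_box_def)
    then show "q \<in> ball p e \<inter> {q. a \<bullet> q \<le> ?X}" using q by blast
  next
    fix q assume q: "q \<in> ball p e \<inter> {q. a \<bullet> q \<le> ?X}"
    then show "q \<in> ball p e \<inter> ?P"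
      using near[of q] assms by (cases "q $ 3 \<le> z 2") (auto simp: frame_stack_3 frame_box_def)
  qed
  then show "p \<in> face_points ?P a ?X"
    using \<open>e > 0\<close> p by (auto simp: face_points_def)
qed

lemma vertical_segment_point:
  "(1 - t) *\<^sub>R point u v w1 + t *\<^sub>R point u v w2 = point u v ((1 - t) * w1 + t * w2)"
  by (simp add: point_def algebra_simps)

lemma frame_stack_vertical_face_guard:
  assumes U: "U1 1 \<le> U1 2" "U1 2 \<le> U1 3" "U1 3 < U2 3" "U2 3 = U2 2" "U2 2 \<le> U2 1"
    and V: "V1 1 \<le> V1 2" "V1 2 \<le> V1 3" "V1 3 < V2 3" "V2 3 \<le> V2 2" "V2 2 \<le> V2 1"
    and Z: "z 0 < z 1" "z 1 < z 2" "z 2 < z 3"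
    and P: "P = frame_stack 3 a c U1 U2 V1 V2 z"
  shows "\<exists>G. vertical_closed_face P G \<and> guards P G"
proof -
  define S where
    "S = {p. a \<bullet> p = U2 3 \<and> V1 3 < c \<bullet> p \<and> c \<bullet> p < V2 3 \<and> z 1 < p $ 3 \<and> p $ 3 < z 3}"
  define m where "m = (V1 3 + V2 3) / 2"
  define g1 where "g1 = point (U2 3) m (z 1)"
  define g2 where "g2 = point (U2 3) m (z 2)"
  have "g2 \<in> S" using V Z by (simp add: S_def g2_def m_def)
  have "convex S"
  proof -
    have "S = {p. a \<bullet> p = U2 3} \<inter> {p. V1 3 < c \<bullet> p} \<inter> {p. c \<bullet> p < V2 3}
              \<inter> {p. z 1 < axis 3 1 \<bullet> p} \<inter> {p. axis 3 1 \<bullet> p < z 3}"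
      by (auto simp: S_def inner_axis')
    then show ?thesis
      by (simp add: convex_Int convex_hyperplane convex_halfspace_gt convex_halfspace_lt)
  qed
  moreover have "S \<subseteq> face_points P a (U2 3)"
    unfolding S_def P using U V by (intro wall_subset_face_points) auto
  ultimately obtain C where C: "C \<in> components (face_points P a (U2 3))" "S \<subseteq> C"
    using exists_component_superset convex_connected \<open>g2 \<in> S\<close> by blast
  have "a \<noteq> 0" using a_unit by auto
  then have "vertical_closed_face P (closure C)"
    using C a_horizontal by (auto simp: vertical_closed_face_def)
  have "open_segment g1 g2 \<subseteq> S"
  proof
    fix x assume "x \<in> open_segment g1 g2"
    then obtain t where "0 < t" "t < 1" "x = point (U2 3) m ((1 - t) * z 1 + t * z 2)"
      by (auto simp: in_segment g1_def g2_def vertical_segment_point)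
    moreover have "0 < t * (z 2 - z 1)" "t * (z 2 - z 1) < z 2 - z 1"
      using \<open>0 < t\<close> \<open>t < 1\<close> Z by simp_all
    then have "z 1 < (1 - t) * z 1 + t * z 2" "(1 - t) * z 1 + t * z 2 < z 3"
      using Z by (simp_all add: algebra_simps)
    ultimately show "x \<in> S" using V by (simp add: S_def m_def)
  qed
  moreover have "g1 $ 3 \<noteq> g2 $ 3" using Z by (simp add: g1_def g2_def)
  then have "g1 \<noteq> g2" by auto
  ultimately have "g1 \<in> closure S"
    using closure_mono[of "open_segment g1 g2" S] by auto
  then have g1_G: "g1 \<in> closure C" using C closure_mono by blast
  have g2_G: "g2 \<in> closure C" using C \<open>g2 \<in> S\<close> closure_subset by blast
  have "guards P (closure C)"
  proof (rule guards_convex_cover)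
    show "P = \<Union>{frame_box a c (U1 1) (U2 1) (V1 1) (V2 1) (z 0) (z 1),
                  frame_box a c (U1 2) (U2 2) (V1 2) (V2 2) (z 1) (z 2),
                  frame_box a c (U1 3) (U2 3) (V1 3) (V2 3) (z 2) (z 3)}"
      by (auto simp: P frame_stack_3)
    have "g1 \<in> frame_box a c (U1 1) (U2 1) (V1 1) (V2 1) (z 0) (z 1)"
         "g2 \<in> frame_box a c (U1 2) (U2 2) (V1 2) (V2 2) (z 1) (z 2)"
         "g2 \<in> frame_box a c (U1 3) (U2 3) (V1 3) (V2 3) (z 2) (z 3)"
      using U V Z by (auto simp: frame_box_def g1_def g2_def m_def)
    then show "convex B \<and> B \<inter> closure C \<noteq> {}"
      if "B \<in> {frame_box a c (U1 1) (U2 1) (V1 1) (V2 1) (z 0) (z 1),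
                frame_box a c (U1 2) (U2 2) (V1 2) (V2 2) (z 1) (z 2),
                frame_box a c (U1 3) (U2 3) (V1 3) (V2 3) (z 2) (z 3)}" for B
      using that g1_G g2_G convex_frame_box by blast
  qed
  with \<open>vertical_closed_face P (closure C)\<close> show ?thesis by blast
qed

end

lemma horizontal_frame_axes:
  "horizontal_frame (axis 1 1) (axis 2 1)" "horizontal_frame (- axis 1 1) (axis 2 1)"
  "horizontal_frame (axis 2 1) (axis 1 1)" "horizontal_frame (- axis 2 1) (axis 1 1)"
  unfolding horizontal_frame_def by (simp_all add: inner_axis_axis) (simp_all add: axis_def)

theorem mainTheorem7:
  fixes x1 x2 y1 y2 z :: "nat \<Rightarrow> real"
  assumes rects: "\<forall>t\<in>{1..3}. x1 t < x2 t \<and> y1 t < y2 t"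
    and heights: "z 0 < z 1" "z 1 < z 2" "z 2 < z 3"
    and c1: "canonical_contact (rect (x1 1) (x2 1) (y1 1) (y2 1))
                               (rect (x1 2) (x2 2) (y1 2) (y2 2))"
    and c2: "canonical_contact (rect (x1 2) (x2 2) (y1 2) (y2 2))
                               (rect (x1 3) (x2 3) (y1 3) (y2 3))"
    and j: "contact_type (x1 3) (x2 3) (y1 3) (y2 3) (rect (x1 2) (x2 2) (y1 2) (y2 2)) \<noteq> 4"
  shows "\<exists>G. vertical_closed_face (orthostack 3 x1 x2 y1 y2 z) G
             \<and> guards (orthostack 3 x1 x2 y1 y2 z) G"
proof -
  have "x1 2 < x2 2" "y1 2 < y2 2" "x1 3 < x2 3" "y1 3 < y2 3" using rects by auto
  moreover have "rect (x1 2) (x2 2) (y1 2) (y2 2) \<subseteq> rect (x1 1) (x2 1) (y1 1) (y2 1)"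
    and "rect (x1 3) (x2 3) (y1 3) (y2 3) \<subseteq> rect (x1 2) (x2 2) (y1 2) (y2 2)"
    using c1 c2 by (auto simp: canonical_contact_def)
  ultimately have nested: "x1 1 \<le> x1 2" "x2 2 \<le> x2 1" "y1 1 \<le> y1 2" "y2 2 \<le> y2 1"
    "x1 2 \<le> x1 3" "x2 3 \<le> x2 2" "y1 2 \<le> y1 3" "y2 3 \<le> y2 2"
    and shared: "x1 3 = x1 2 \<or> x2 3 = x2 2 \<or> y1 3 = y1 2 \<or> y2 3 = y2 2"
    using contact_type_ne_4_imp_shared_side[OF _ _ _ j] by (auto simp: rect_subset_iff)
  note bounds = nested heights \<open>x1 3 < x2 3\<close> \<open>y1 3 < y2 3\<close>
  note guard = horizontal_frame.frame_stack_vertical_face_guard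
  note stack_eqs = orthostack_eq_frame_stack frame_stack_uminus
    frame_stack_swap[of _ "axis 1 1" "axis 2 1"]
  from shared show ?thesis
  proof (elim disjE)
    assume shared_side: "x1 3 = x1 2"
    show ?thesis
      by (rule guard[OF horizontal_frame_axes(2), of "\<lambda>t. - x2 t" "\<lambda>t. - x1 t" y1 y2 z])
        (use shared_side bounds in \<open>auto simp: stack_eqs\<close>)
  next
    assume shared_side: "x2 3 = x2 2"
    show ?thesis
      by (rule guard[OF horizontal_frame_axes(1), of x1 x2 y1 y2 z])
        (use shared_side bounds in \<open>auto simp: stack_eqs\<close>)
  next
    assume shared_side: "y1 3 = y1 2"
    show ?thesis
      by (rule guard[OF horizontal_frame_axes(4), of "\<lambda>t. - y2 t" "\<lambda>t. - y1 t" x1 x2 z])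
        (use shared_side bounds in \<open>auto simp: stack_eqs\<close>)
  next
    assume shared_side: "y2 3 = y2 2"
    show ?thesis
      by (rule guard[OF horizontal_frame_axes(3), of y1 y2 x1 x2 z])
        (use shared_side bounds in \<open>auto simp: stack_eqs\<close>)
  qed
qed

end
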